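(* Let $\Sigma$ be a smooth surface in $\mathbb{R}^3$ and let $\Gamma$ be a line of curvature on $\Sigma$ whose geodesic curvature on $\Sigma$ is a constant $c\neq 0$. Suppose that the principal curvature of $\Sigma$ along $\Gamma$ (i.e. the normal curvature of $\Sigma$ in the direction tangent to $\Gamma$) does not vanish at any point of $\Gamma$, and that $\Gamma$, regarded as a space curve in $\mathbb{R}^3$, has nowhere vanishing torsion. Then there exists a sphere of radius $\frac{1}{|c|}$ which intersects $\Sigma$ orthogonally along $\Gamma$.
   Context: A line of curvature on $\Sigma$ is a curve whose tangent vector is at every point a principal direction of $\Sigma$. *)

theory Defs
  imports "HOL-Analysis.Analysis"
begin

fun Ck_on :: "nat \<Rightarrow> ('a::euclidean_space \<Rightarrow> 'b::real_normed_vector) \<Rightarrow> 'a set \<Rightarrow> bool" where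
  "Ck_on 0 f U = continuous_on U f"
| "Ck_on (Suc k) f U =
     (f differentiable_on U \<and> (\<forall>i\<in>Basis. Ck_on k (\<lambda>x. frechet_derivative f (at x) i) U))"

definition smooth_on :: "('a::euclidean_space \<Rightarrow> 'b::real_normed_vector) \<Rightarrow> 'a set \<Rightarrow> bool" where
  "smooth_on f U \<longleftrightarrow> (\<forall>k. Ck_on k f U)"

definition Xu :: "(real^2 \<Rightarrow> real^3) \<Rightarrow> real^2 \<Rightarrow> real^3" where
  "Xu X p = frechet_derivative X (at p) (axis 1 1)"
definition Xv :: "(real^2 \<Rightarrow> real^3) \<Rightarrow> real^2 \<Rightarrow> real^3" where
  "Xv X p = frechet_derivative X (at p) (axis 2 1)"

definition regular_surface_patch :: "(real^2 \<Rightarrow> real^3) \<Rightarrow> (real^2) set \<Rightarrow> bool" where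
  "regular_surface_patch X U \<longleftrightarrow> open U \<and> U \<noteq> {} \<and> smooth_on X U \<and>
     (\<forall>p\<in>U. cross3 (Xu X p) (Xv X p) \<noteq> 0)"

definition unit_normal :: "(real^2 \<Rightarrow> real^3) \<Rightarrow> real^2 \<Rightarrow> real^3" where
  "unit_normal X p = (1 / norm (cross3 (Xu X p) (Xv X p))) *\<^sub>R cross3 (Xu X p) (Xv X p)"

definition d1 :: "(real \<Rightarrow> real^3) \<Rightarrow> real \<Rightarrow> real^3" where
  "d1 g t = vector_derivative g (at t)"
definition d2 :: "(real \<Rightarrow> real^3) \<Rightarrow> real \<Rightarrow> real^3" where
  "d2 g t = vector_derivative (d1 g) (at t)"
definition d3 :: "(real \<Rightarrow> real^3) \<Rightarrow> real \<Rightarrow> real^3" where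
  "d3 g t = vector_derivative (d2 g) (at t)"

definition torsion :: "(real \<Rightarrow> real^3) \<Rightarrow> real \<Rightarrow> real" where
  "torsion g t = (cross3 (d1 g t) (d2 g t) \<bullet> d3 g t) / (norm (cross3 (d1 g t) (d2 g t)))\<^sup>2"

text \<open>Curve on the surface: \<gamma> = X \<circ> \<alpha>, \<alpha> : I \<rightarrow> U.
  Shape operator S = -dN; the tangent vector \<gamma>'(t) = dX(\<alpha>'(t)) is a principal direction
  iff S(\<gamma>') = dN applied with a minus sign to \<alpha>' is a multiple of \<gamma>'.\<close>
definition line_of_curvature :: "(real^2 \<Rightarrow> real^3) \<Rightarrow> (real \<Rightarrow> real^2) \<Rightarrow> real set \<Rightarrow> bool" where
  "line_of_curvature X \<alpha> I \<longleftrightarrow>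
     (\<forall>t\<in>I. \<exists>k::real. - frechet_derivative (unit_normal X) (at (\<alpha> t)) (vector_derivative \<alpha> (at t))
                        = k *\<^sub>R d1 (X \<circ> \<alpha>) t)"

definition normal_curvature :: "(real^2 \<Rightarrow> real^3) \<Rightarrow> (real \<Rightarrow> real^2) \<Rightarrow> real \<Rightarrow> real" where
  "normal_curvature X \<alpha> t =
     (- frechet_derivative (unit_normal X) (at (\<alpha> t)) (vector_derivative \<alpha> (at t)) \<bullet> d1 (X \<circ> \<alpha>) t)
       / (norm (d1 (X \<circ> \<alpha>) t))\<^sup>2"

definition geodesic_curvature :: "(real^2 \<Rightarrow> real^3) \<Rightarrow> (real \<Rightarrow> real^2) \<Rightarrow> real \<Rightarrow> real" where
  "geodesic_curvature X \<alpha> t =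
     (d2 (X \<circ> \<alpha>) t \<bullet> cross3 (unit_normal X (\<alpha> t)) (d1 (X \<circ> \<alpha>) t)) / (norm (d1 (X \<circ> \<alpha>) t)) ^ 3"

end

theory Submission imports Defs begin

text \<open>
  Let \<open>T\<close> be the unit tangent of \<open>\<gamma> = X \<circ> \<alpha>\<close>, \<open>N\<close> the unit normal of the surface and
  \<open>s\<close> arc length. Along a line of curvature \<open>N'\<close> is parallel to \<open>T\<close>, and the geodesic curvature
  is the \<open>N \<times> T\<close>-component of \<open>T'\<close>, so \<open>T' = c (N \<times> T) + \<kappa>\<^sub>n N\<close> and hence
  \<open>(N \<times> T)' = N \<times> T' = - c T\<close>. Therefore \<open>\<gamma> + (1/c) (N \<times> T)\<close> has zero derivative: it is a
  fixed point \<open>p\<close>, the curve stays at distance \<open>1/\<bar>c\<bar>\<close> from \<open>p\<close>, and \<open>\<gamma> - p\<close> is tangent to the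
  surface, i.e. the sphere meets it orthogonally.
\<close>

lemma smooth_on_differentiable_on:
  assumes "smooth_on f U"
  shows "f differentiable_on U"
  using assms unfolding smooth_on_def by (metis Ck_on.simps(2))

lemma smooth_on_differentiable_at:
  assumes "smooth_on f U" "open U" "x \<in> U"
  shows "f differentiable at x"
  using smooth_on_differentiable_on[OF assms(1)] assms(2,3)
  by (simp add: differentiable_on_eq_differentiable_at)

lemma smooth_on_partial_derivative:
  assumes "smooth_on f U" "i \<in> Basis"
  shows "smooth_on (\<lambda>x. frechet_derivative f (at x) i) U"
  using assms unfolding smooth_on_def by (metis Ck_on.simps(2))

lemma has_vector_derivative_frechet_derivative:
  fixes f :: "real \<Rightarrow> 'b::real_normed_vector"
  assumes "f differentiable at x"
  shows "(f has_vector_derivative frechet_derivative f (at x) 1) (at x)"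
proof -
  have "frechet_derivative f (at x) = (\<lambda>h. h *\<^sub>R frechet_derivative f (at x) 1)"
    using linear_frechet_derivative[OF assms] by (metis linear_scale mult.comm_neutral real_scaleR_def)
  then show ?thesis
    using assms frechet_derivative_works unfolding has_vector_derivative_def by metis
qed

lemma has_vector_derivative_chain_at:
  assumes "(g has_vector_derivative v) (at t)" "f differentiable at (g t)"
  shows "((f \<circ> g) has_vector_derivative frechet_derivative f (at (g t)) v) (at t)"
proof -
  have "(f has_derivative frechet_derivative f (at (g t))) (at (g t) within range g)"
    using assms(2) frechet_derivative_works has_derivative_at_withinI by blast
  then show ?thesis
    using vector_derivative_diff_chain_within[of g v t UNIV] assms(1) by simp
qed

lemma frechet_derivative_vec2_expansion:
  fixes f :: "real^2 \<Rightarrow> 'b::real_normed_vector"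
  assumes "f differentiable at x"
  shows "frechet_derivative f (at x) v = (v$1) *\<^sub>R frechet_derivative f (at x) (axis 1 1)
          + (v$2) *\<^sub>R frechet_derivative f (at x) (axis 2 1)"
proof -
  have "v = (v$1) *\<^sub>R axis 1 1 + (v$2) *\<^sub>R axis 2 1"
    by (simp add: vec_eq_iff forall_2 axis_def)
  then have "frechet_derivative f (at x) v
      = frechet_derivative f (at x) ((v$1) *\<^sub>R axis 1 1 + (v$2) *\<^sub>R axis 2 1)"
    by simp
  then show ?thesis
    using linear_frechet_derivative[OF assms] by (simp add: linear_add linear_scale)
qed

lemma bounded_bilinear_cross3: "bounded_bilinear (cross3 :: real^3 \<Rightarrow> real^3 \<Rightarrow> real^3)"
  using bilinear_cross bilinear_conv_bounded_bilinear by blast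

lemma cross3_orthonormal_expansion:
  fixes N w x :: "real^3"
  assumes "N \<bullet> N = 1" "N \<bullet> w = 0"
  shows "(w \<bullet> w) *\<^sub>R cross3 N x = (x \<bullet> w) *\<^sub>R cross3 N w - (x \<bullet> cross3 N w) *\<^sub>R w"
  using assms unfolding cross3_def inner_vec_def sum_3 vec_eq_iff forall_3
  by (simp add: vector_def) algebra

lemma norm_cross3_orthogonal_unit:
  fixes N w :: "real^3"
  assumes "norm N = 1" "N \<bullet> w = 0"
  shows "norm (cross3 N w) = norm w"
proof -
  have "(norm (cross3 N w))\<^sup>2 = (norm w)\<^sup>2" using norm_cross_dot[of N w] assms by simp
  then show ?thesis by (simp add: power2_eq_iff_nonneg)
qed

lemma sphere_center_has_vector_derivative_zero:
  fixes \<gamma> V N :: "real \<Rightarrow> real^3"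
  assumes \<gamma>': "(\<gamma> has_vector_derivative V t) (at t)"
    and V': "(V has_vector_derivative A) (at t)"
    and N': "(N has_vector_derivative - k *\<^sub>R V t) (at t)"
    and unit: "norm (N t) = 1" and orth: "N t \<bullet> V t = 0" and nz: "V t \<noteq> 0"
    and geod: "A \<bullet> cross3 (N t) (V t) = c * norm (V t) ^ 3" and c: "c \<noteq> 0"
  shows "((\<lambda>s. \<gamma> s + (1/c) *\<^sub>R (inverse (norm (V s)) *\<^sub>R cross3 (N s) (V s)))
           has_vector_derivative 0) (at t)"
proof -
  define v where "v = norm (V t)"
  have v: "v > 0" using nz unfolding v_def by simp
  have norm': "((\<lambda>s. norm (V s)) has_vector_derivative (A \<bullet> sgn (V t))) (at t)"
  proof -
    have "(norm has_derivative (\<lambda>h. h \<bullet> sgn (V t))) (at (V t) within range V)"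
      using has_derivative_norm[OF nz] by (rule has_derivative_at_withinI)
    from vector_derivative_diff_chain_within[OF V' this] show ?thesis by (simp add: o_def)
  qed
  have inverse': "((\<lambda>s. inverse (norm (V s))) has_field_derivative
      - ((A \<bullet> sgn (V t)) * inverse (v ^ 2))) (at t)"
    using DERIV_inverse_fun[OF norm'[unfolded has_real_derivative_iff_has_vector_derivative[symmetric]]]
      nz unfolding v_def by (simp add: power2_eq_square)
  have cross': "((\<lambda>s. cross3 (N s) (V s)) has_vector_derivative cross3 (N t) A) (at t)"
    using bounded_bilinear.has_vector_derivative[OF bounded_bilinear_cross3 N' V']
    by (simp add: cross_mult_left)
  have darboux: "cross3 (N t) A = ((A \<bullet> V t) / v^2) *\<^sub>R cross3 (N t) (V t) - (c * v) *\<^sub>R V t"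
  proof -
    have scaled: "(v^2) *\<^sub>R cross3 (N t) A
        = (A \<bullet> V t) *\<^sub>R cross3 (N t) (V t) - (c * v^3) *\<^sub>R V t"
      using cross3_orthonormal_expansion[of "N t" "V t" A] unit orth geod
      unfolding v_def by (simp add: dot_square_norm)
    have "cross3 (N t) A = inverse (v^2) *\<^sub>R ((v^2) *\<^sub>R cross3 (N t) A)"
      using v by simp
    then show ?thesis
      unfolding scaled
      using v by (simp add: scaleR_diff_right field_simps power3_eq_cube power2_eq_square)
  qed
  have "((\<lambda>s. \<gamma> s + (1/c) *\<^sub>R (inverse (norm (V s)) *\<^sub>R cross3 (N s) (V s))) has_vector_derivative
      V t + (1/c) *\<^sub>R (inverse v *\<^sub>R cross3 (N t) A
        + (- ((A \<bullet> sgn (V t)) * inverse (v ^ 2))) *\<^sub>R cross3 (N t) (V t))) (at t)"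
    using has_vector_derivative_add[OF \<gamma>' has_vector_derivative_scaleR[OF DERIV_const[of "1/c"]
        has_vector_derivative_scaleR[OF inverse' cross']]]
    unfolding v_def by simp
  also have "V t + (1/c) *\<^sub>R (inverse v *\<^sub>R cross3 (N t) A
        + (- ((A \<bullet> sgn (V t)) * inverse (v ^ 2))) *\<^sub>R cross3 (N t) (V t)) = 0"
    unfolding darboux sgn_div_norm v_def[symmetric] using v c
    by (simp add: inner_commute scaleR_diff_right scaleR_add_right field_simps power2_eq_square)
  finally show ?thesis .
qed

lemma conormal_offset:
  fixes N w x p :: "real^3"
  assumes "norm N = 1" "N \<bullet> w = 0" "w \<noteq> 0" "c \<noteq> 0"
    and "x + (1/c) *\<^sub>R (inverse (norm w) *\<^sub>R cross3 N w) = p"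
  shows "dist x p = 1 / \<bar>c\<bar> \<and> (x - p) \<bullet> N = 0"
proof -
  have "x - p = - ((1/c) *\<^sub>R (inverse (norm w) *\<^sub>R cross3 N w))"
    using assms(5) by (auto simp: algebra_simps)
  then show ?thesis
    using norm_cross3_orthogonal_unit[OF assms(1,2)] assms(3)
    by (simp add: dist_norm cross_mult_left dot_cross_self inner_commute)
qed

lemma unit_normal_orthogonal:
  assumes "X differentiable at p"
  shows "unit_normal X p \<bullet> frechet_derivative X (at p) v = 0"
  using frechet_derivative_vec2_expansion[OF assms, of v]
  unfolding unit_normal_def Xu_def Xv_def by (simp add: inner_add_right dot_cross_self)

lemma norm_unit_normal:
  assumes "cross3 (Xu X p) (Xv X p) \<noteq> 0"
  shows "norm (unit_normal X p) = 1"
  using assms unfolding unit_normal_def by simp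

lemma unit_normal_differentiable:
  assumes "Xu X differentiable at p" "Xv X differentiable at p"
    and "cross3 (Xu X p) (Xv X p) \<noteq> 0"
  shows "unit_normal X differentiable at p"
proof -
  define C where "C = (\<lambda>q. cross3 (Xu X q) (Xv X q))"
  have C: "C differentiable at p"
    using bounded_bilinear.FDERIV[OF bounded_bilinear_cross3] assms(1,2)
    unfolding C_def differentiable_def by blast
  have "norm differentiable at (C p)"
    using has_derivative_norm[of "C p"] assms(3) unfolding C_def differentiable_def by blast
  then have "(\<lambda>q. norm (C q)) differentiable at p"
    using differentiable_chain_at[OF C] by (simp add: o_def)
  then have "(\<lambda>q. (1 / norm (C q)) *\<^sub>R C q) differentiable at p"
    using assms(3) C by (intro differentiable_scaleR differentiable_divide) (auto simp: C_def)
  moreover have "unit_normal X = (\<lambda>q. (1 / norm (C q)) *\<^sub>R C q)"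
    by (rule ext) (simp add: unit_normal_def C_def)
  ultimately show ?thesis by simp
qed

locale curve_on_patch =
  fixes X :: "real^2 \<Rightarrow> real^3" and U :: "(real^2) set"
    and \<alpha> :: "real \<Rightarrow> real^2" and I :: "real set"
  assumes patch: "regular_surface_patch X U"
    and open_I: "open I" and smooth_\<alpha>: "smooth_on \<alpha> I" and \<alpha>_in_U: "\<alpha> ` I \<subseteq> U"
begin

lemma \<alpha>_mem: "t \<in> I \<Longrightarrow> \<alpha> t \<in> U"
  using \<alpha>_in_U by blast

lemma patch_regular: "p \<in> U \<Longrightarrow> cross3 (Xu X p) (Xv X p) \<noteq> 0"
  using patch unfolding regular_surface_patch_def by blast

lemma X_differentiable: "p \<in> U \<Longrightarrow> X differentiable at p"
  using patch smooth_on_differentiable_at unfolding regular_surface_patch_def by blast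

lemma Xu_differentiable: "p \<in> U \<Longrightarrow> Xu X differentiable at p"
  and Xv_differentiable: "p \<in> U \<Longrightarrow> Xv X differentiable at p"
proof -
  have "axis 1 1 \<in> (Basis :: (real^2) set)" "axis 2 1 \<in> (Basis :: (real^2) set)"
    by (auto simp: Basis_vec_def)
  moreover have "Xu X = (\<lambda>p. frechet_derivative X (at p) (axis 1 1))"
    "Xv X = (\<lambda>p. frechet_derivative X (at p) (axis 2 1))"
    by (auto simp: Xu_def Xv_def)
  ultimately have "smooth_on (Xu X) U" "smooth_on (Xv X) U"
    using patch smooth_on_partial_derivative unfolding regular_surface_patch_def by metis+
  then show "p \<in> U \<Longrightarrow> Xu X differentiable at p" "p \<in> U \<Longrightarrow> Xv X differentiable at p"
    using patch smooth_on_differentiable_at unfolding regular_surface_patch_def by blast+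
qed

lemma \<alpha>_differentiable: "t \<in> I \<Longrightarrow> \<alpha> differentiable at t"
  using smooth_on_differentiable_at[OF smooth_\<alpha> open_I] .

lemma \<alpha>_velocity: "t \<in> I \<Longrightarrow> (\<alpha> has_vector_derivative vector_derivative \<alpha> (at t)) (at t)"
  using \<alpha>_differentiable vector_derivative_works by blast

lemma \<alpha>_velocity_differentiable:
  assumes t: "t \<in> I"
  shows "(\<lambda>s. vector_derivative \<alpha> (at s)) differentiable at t"
proof -
  have "smooth_on (\<lambda>s. frechet_derivative \<alpha> (at s) 1) I"
    using smooth_on_partial_derivative[OF smooth_\<alpha>] by simp
  then obtain D where "((\<lambda>s. frechet_derivative \<alpha> (at s) 1) has_derivative D) (at t)"
    using smooth_on_differentiable_at open_I t unfolding differentiable_def by blast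
  moreover have "frechet_derivative \<alpha> (at s) 1 = vector_derivative \<alpha> (at s)" if "s \<in> I" for s
    using has_vector_derivative_frechet_derivative \<alpha>_differentiable vector_derivative_at that
    by metis
  ultimately have "((\<lambda>s. vector_derivative \<alpha> (at s)) has_derivative D) (at t)"
    by (rule has_derivative_transform_within_open[OF _ open_I t])
  then show ?thesis
    unfolding differentiable_def by blast
qed

lemma curve_velocity:
  "t \<in> I \<Longrightarrow> ((X \<circ> \<alpha>) has_vector_derivative
     frechet_derivative X (at (\<alpha> t)) (vector_derivative \<alpha> (at t))) (at t)"
  using has_vector_derivative_chain_at \<alpha>_velocity X_differentiable \<alpha>_mem by blast

lemma d1_curve: "t \<in> I \<Longrightarrow> d1 (X \<circ> \<alpha>) t = frechet_derivative X (at (\<alpha> t)) (vector_derivative \<alpha> (at t))"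
  unfolding d1_def using curve_velocity vector_derivative_at by blast

lemma curve_has_vector_derivative_d1: "t \<in> I \<Longrightarrow> ((X \<circ> \<alpha>) has_vector_derivative d1 (X \<circ> \<alpha>) t) (at t)"
  using curve_velocity d1_curve by simp

lemma d1_curve_has_vector_derivative_d2:
  assumes t: "t \<in> I"
  shows "(d1 (X \<circ> \<alpha>) has_vector_derivative d2 (X \<circ> \<alpha>) t) (at t)"
proof -
  define W where "W = (\<lambda>s. (vector_derivative \<alpha> (at s) $ 1) *\<^sub>R Xu X (\<alpha> s)
                          + (vector_derivative \<alpha> (at s) $ 2) *\<^sub>R Xv X (\<alpha> s))"
  have d1_eq_W: "d1 (X \<circ> \<alpha>) s = W s" if "s \<in> I" for s
    using d1_curve[OF that] frechet_derivative_vec2_expansion[OF X_differentiable[OF \<alpha>_mem[OF that]],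
        of "vector_derivative \<alpha> (at s)"]
    unfolding W_def Xu_def Xv_def by simp
  have "(\<lambda>s. vector_derivative \<alpha> (at s) $ i) differentiable at t" for i
    using differentiable_chain_at[OF \<alpha>_velocity_differentiable[OF t]
        bounded_linear_imp_differentiable[OF bounded_linear_vec_nth]]
    by (simp add: o_def)
  moreover have "(Xu X \<circ> \<alpha>) differentiable at t" "(Xv X \<circ> \<alpha>) differentiable at t"
    using differentiable_chain_at \<alpha>_differentiable[OF t] \<alpha>_mem[OF t]
      Xu_differentiable Xv_differentiable by blast+
  ultimately have "W differentiable at t"
    unfolding W_def by (intro differentiable_add differentiable_scaleR) (auto simp: o_def)
  then have "(W has_vector_derivative vector_derivative W (at t)) (at t)"
    by (simp add: vector_derivative_works[symmetric])
  then have "(d1 (X \<circ> \<alpha>) has_vector_derivative vector_derivative W (at t)) (at t)"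
    by (rule has_vector_derivative_transform_within_open[OF _ open_I t]) (simp add: d1_eq_W)
  then show ?thesis
    unfolding d2_def by (simp add: vector_derivative_at)
qed

lemma unit_normal_along_curve:
  "t \<in> I \<Longrightarrow> ((unit_normal X \<circ> \<alpha>) has_vector_derivative
     frechet_derivative (unit_normal X) (at (\<alpha> t)) (vector_derivative \<alpha> (at t))) (at t)"
  using has_vector_derivative_chain_at \<alpha>_velocity unit_normal_differentiable
    Xu_differentiable Xv_differentiable patch_regular \<alpha>_mem by blast

lemma norm_unit_normal_along_curve: "t \<in> I \<Longrightarrow> norm (unit_normal X (\<alpha> t)) = 1"
  using norm_unit_normal patch_regular \<alpha>_mem by blast

lemma unit_normal_orthogonal_velocity: "t \<in> I \<Longrightarrow> unit_normal X (\<alpha> t) \<bullet> d1 (X \<circ> \<alpha>) t = 0"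
  using d1_curve unit_normal_orthogonal X_differentiable \<alpha>_mem by simp

definition sphere_center :: "real \<Rightarrow> real \<Rightarrow> real^3" where
  "sphere_center c t = (X \<circ> \<alpha>) t + (1/c) *\<^sub>R (inverse (norm (d1 (X \<circ> \<alpha>) t)) *\<^sub>R
     cross3 ((unit_normal X \<circ> \<alpha>) t) (d1 (X \<circ> \<alpha>) t))"

lemma curvature_sphere_center_constant:
  assumes I: "is_interval I" and loc: "line_of_curvature X \<alpha> I"
    and nz: "\<forall>t\<in>I. d1 (X \<circ> \<alpha>) t \<noteq> 0"
    and geod: "\<forall>t\<in>I. geodesic_curvature X \<alpha> t = c" and c: "c \<noteq> 0"
  obtains p where "\<forall>t\<in>I. sphere_center c t = p"
proof -
  have "(sphere_center c has_derivative (\<lambda>h. 0)) (at t within I)" if t: "t \<in> I" for t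
  proof -
    obtain k where "- frechet_derivative (unit_normal X) (at (\<alpha> t)) (vector_derivative \<alpha> (at t))
                      = k *\<^sub>R d1 (X \<circ> \<alpha>) t"
      using loc t unfolding line_of_curvature_def by blast
    then have N': "((unit_normal X \<circ> \<alpha>) has_vector_derivative - k *\<^sub>R d1 (X \<circ> \<alpha>) t) (at t)"
      using unit_normal_along_curve[OF t] by (metis minus_minus scaleR_minus_left)
    have unit: "norm ((unit_normal X \<circ> \<alpha>) t) = 1"
      using norm_unit_normal_along_curve[OF t] by simp
    have orth: "(unit_normal X \<circ> \<alpha>) t \<bullet> d1 (X \<circ> \<alpha>) t = 0"
      using unit_normal_orthogonal_velocity[OF t] by simp
    have geo: "d2 (X \<circ> \<alpha>) t \<bullet> cross3 ((unit_normal X \<circ> \<alpha>) t) (d1 (X \<circ> \<alpha>) t)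
                 = c * norm (d1 (X \<circ> \<alpha>) t) ^ 3"
      using geod nz t unfolding geodesic_curvature_def by (auto simp: field_simps)
    have "(sphere_center c has_vector_derivative 0) (at t)"
      unfolding sphere_center_def[abs_def]
      by (rule sphere_center_has_vector_derivative_zero[OF curve_has_vector_derivative_d1[OF t]
            d1_curve_has_vector_derivative_d2[OF t] N' unit orth bspec[OF nz t] geo c])
    then show ?thesis
      unfolding has_vector_derivative_def by (simp add: has_derivative_at_withinI)
  qed
  then show ?thesis
    using has_derivative_zero_constant[OF is_interval_convex[OF I]] that by blast
qed

end

theorem lemma3p1:
  fixes X :: "real^2 \<Rightarrow> real^3" and U :: "(real^2) set"
    and \<alpha> :: "real \<Rightarrow> real^2" and I :: "real set" and c :: real
  assumes surf: "regular_surface_patch X U"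
    and I: "open I" "is_interval I" "I \<noteq> {}"
    and curve: "smooth_on \<alpha> I" "\<alpha> ` I \<subseteq> U"
    and regular: "\<forall>t\<in>I. d1 (X \<circ> \<alpha>) t \<noteq> 0"
    and loc: "line_of_curvature X \<alpha> I"
    and geod: "\<forall>t\<in>I. geodesic_curvature X \<alpha> t = c" and c: "c \<noteq> 0"
    and kn: "\<forall>t\<in>I. normal_curvature X \<alpha> t \<noteq> 0"
    and tors: "\<forall>t\<in>I. torsion (X \<circ> \<alpha>) t \<noteq> 0"
  shows "\<exists>p::real^3. \<forall>t\<in>I. dist ((X \<circ> \<alpha>) t) p = 1 / \<bar>c\<bar> \<and>
            ((X \<circ> \<alpha>) t - p) \<bullet> unit_normal X (\<alpha> t) = 0"
proof -
  interpret curve_on_patch X U \<alpha> I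
    using surf I(1) curve by unfold_locales
  obtain p where p: "\<forall>t\<in>I. sphere_center c t = p"
    using curvature_sphere_center_constant[OF I(2) loc regular geod c] by blast
  have "dist ((X \<circ> \<alpha>) t) p = 1 / \<bar>c\<bar> \<and> ((X \<circ> \<alpha>) t - p) \<bullet> unit_normal X (\<alpha> t) = 0"
    if t: "t \<in> I" for t
    using conormal_offset[OF norm_unit_normal_along_curve[OF t] unit_normal_orthogonal_velocity[OF t]]
      regular c p t by (simp add: sphere_center_def)
  then show ?thesis by blast
qed

end
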